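(* Let $\Omega\subset\mathbb R^d$ be a bounded Borel set, $f:\Omega\to[0,\infty)$ with $\int_\Omega f=1$, $p\ge1$, $x_1,x_2\in\Omega$, and $h_1,h_2:[0,1]\to[0,\infty)$ continuous and non-decreasing, and assume $|G(s)-G(t)|<|s-t|$ for all $s\neq t$ in $\mathbb R$. Let $\psi_0:\Omega\to\{0,1\}$ be any Borel function and define recursively, for $j\ge0$, $m_j=\int_\Omega(1-\psi_j)f\,dx$, $t_{j+1}=h_2(1-m_j)-h_1(m_j)$, and $\psi_{j+1}(x)=0$ if $\tau(x)<t_{j+1}$, $\psi_{j+1}(x)=1$ otherwise. Then $t_j\to\bar t$ as $j\to\infty$, and $\psi_j\to\bar\psi$ uniformly on every compact subset of $\Omega\setminus\{\tau=\bar t\}$.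
   Context: $\tau(x)=|x-x_1|^p-|x-x_2|^p$, $m(t)=\int_{\{x\in\Omega:\tau(x)<t\}}f\,dx$, $G(t)=h_2(1-m(t))-h_1(m(t))$. Under the hypotheses there is a unique $\bar t\in\mathbb R$ with $G(\bar t)=\bar t$; the (unique) equilibrium is $A_1=\{\tau<\bar t\}$, $A_2=\{\tau>\bar t\}$, and $\bar\psi(x)=0$ if $\tau(x)<\bar t$, $\bar\psi(x)=1$ if $\tau(x)>\bar t$. *)

theory Defs
  imports "HOL-Analysis.Analysis"
begin

definition tau :: "real \<Rightarrow> 'a::euclidean_space \<Rightarrow> 'a \<Rightarrow> 'a \<Rightarrow> real" where
  "tau p x1 x2 x = norm (x - x1) powr p - norm (x - x2) powr p"

definition mfun :: "'a::euclidean_space set \<Rightarrow> ('a \<Rightarrow> real) \<Rightarrow> real \<Rightarrow> 'a \<Rightarrow> 'a \<Rightarrow> real \<Rightarrow> real" where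
  "mfun \<Omega> f p x1 x2 t = (LINT x:{x\<in>\<Omega>. tau p x1 x2 x < t}|lborel. f x)"

definition Gfun :: "(real \<Rightarrow> real) \<Rightarrow> (real \<Rightarrow> real) \<Rightarrow> 'a::euclidean_space set \<Rightarrow> ('a \<Rightarrow> real)
    \<Rightarrow> real \<Rightarrow> 'a \<Rightarrow> 'a \<Rightarrow> real \<Rightarrow> real" where
  "Gfun h1 h2 \<Omega> f p x1 x2 t = h2 (1 - mfun \<Omega> f p x1 x2 t) - h1 (mfun \<Omega> f p x1 x2 t)"

end

theory Submission
  imports Defs
begin

text \<open>
  Since \<open>\<psi>\<^sub>j\<^sub>+\<^sub>1\<close> is the indicator of \<open>{\<tau> \<ge> t\<^sub>j\<^sub>+\<^sub>1}\<close>, we have \<open>m\<^sub>j\<^sub>+\<^sub>1 = m(t\<^sub>j\<^sub>+\<^sub>1)\<close>,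
  i.e. \<open>t\<^sub>j\<^sub>+\<^sub>2 = G(t\<^sub>j\<^sub>+\<^sub>1)\<close>.
  As \<open>\<tau>\<close> is bounded on \<open>\<Omega>\<close>, \<open>G\<close> is constant for large \<open>|t|\<close>; being a strict
  contraction it is continuous, hence bounded, and the intermediate value theorem yields a
  fixed point \<open>tbar\<close>. The distances \<open>|t\<^sub>j - tbar|\<close> decrease to some \<open>L\<close>; a cluster
  point \<open>v\<close> of the iterates and its image \<open>G v\<close> both lie at distance \<open>L\<close> from \<open>tbar\<close>,
  which strict contractivity only allows for \<open>v = tbar\<close>, so \<open>L = 0\<close>. On a compact set
  avoiding \<open>{\<tau> = tbar}\<close> the values of \<open>\<tau>\<close> stay a positive distance away from \<open>tbar\<close>,
  so \<open>\<psi>\<^sub>j\<close> eventually agrees there with the limit.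
\<close>

lemma strict_contraction_continuous:
  fixes G :: "'a::metric_space \<Rightarrow> 'b::metric_space"
  assumes "\<And>s r. s \<noteq> r \<Longrightarrow> dist (G s) (G r) < dist s r"
  shows "continuous_on S G"
  unfolding continuous_on_iff
  by (metis assms dist_self order.strict_trans)

lemma strict_contraction_iterates_tendsto_fixpoint:
  fixes G :: "'a::heine_borel \<Rightarrow> 'a" and u :: "nat \<Rightarrow> 'a"
  assumes contr: "\<And>s r. s \<noteq> r \<Longrightarrow> dist (G s) (G r) < dist s r"
    and fixpoint: "G z = z"
    and iter: "\<And>n. u (Suc n) = G (u n)"
  shows "u \<longlonglongrightarrow> z"
proof -
  have nonexp: "dist (G s) (G r) \<le> dist s r" for s r
    using contr[of s r] by (cases "s = r") auto
  define d where "d n = dist (u n) z" for n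
  have "decseq d"
    unfolding decseq_Suc_iff d_def iter using nonexp fixpoint by metis
  then obtain L where dL: "d \<longlonglongrightarrow> L"
    using decseq_convergent[of d 0] unfolding d_def by auto
  have "u n \<in> cball z (d 0)" for n
    using decseqD[OF \<open>decseq d\<close>, of 0 n] by (simp add: d_def dist_commute)
  then obtain v r where r: "strict_mono r" and uv: "(u \<circ> r) \<longlonglongrightarrow> v"
    using compact_imp_seq_compact[OF compact_cball] seq_compactE by metis
  have "(d \<circ> r) \<longlonglongrightarrow> dist v z"
    unfolding d_def o_def using uv unfolding o_def by (intro tendsto_intros)
  then have L_v: "L = dist v z"
    using LIMSEQ_unique LIMSEQ_subseq_LIMSEQ[OF dL r] by blast
  have "(\<lambda>n. u (Suc (r n))) \<longlonglongrightarrow> G v"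
    unfolding iter
    using continuous_on_tendsto_compose[OF strict_contraction_continuous[OF contr, of UNIV]
        uv[unfolded o_def]]
    by simp
  then have "(\<lambda>n. d (Suc (r n))) \<longlonglongrightarrow> dist (G v) z"
    unfolding d_def by (intro tendsto_intros)
  moreover have "strict_mono (\<lambda>n. Suc (r n))"
    using r by (auto simp: strict_mono_def)
  ultimately have L_Gv: "L = dist (G v) z"
    using LIMSEQ_unique LIMSEQ_subseq_LIMSEQ[OF dL] unfolding o_def by blast
  have "v = z"
    using contr[of v z] fixpoint L_v L_Gv by (cases "v = z") auto
  then have "d \<longlonglongrightarrow> 0"
    using dL L_v by simp
  then show ?thesis
    unfolding d_def by (rule tendsto_dist_iff[THEN iffD2])
qed

lemma bounded_continuous_real_fixpoint:
  fixes G :: "real \<Rightarrow> real"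
  assumes "continuous_on UNIV G" and "bounded (range G)"
  obtains z where "G z = z"
proof -
  obtain M where M: "\<And>s. \<bar>G s\<bar> \<le> M"
    using assms(2) unfolding bounded_iff by auto
  have "\<exists>x. -M-1 \<le> x \<and> x \<le> M+1 \<and> x - G x = 0"
    using M[of "-M-1"] M[of "M+1"] M[of 0] continuous_on_subset[OF assms(1)]
    by (intro IVT'[of "\<lambda>x. x - G x"] continuous_intros) auto
  then show ?thesis
    using that by (metis eq_iff_diff_eq_0)
qed

lemma uniform_limit_threshold_functions:
  fixes g :: "'a::topological_space \<Rightarrow> real" and t :: "nat \<Rightarrow> real"
  assumes K: "compact K" and g: "continuous_on K g" and c: "\<And>x. x \<in> K \<Longrightarrow> g x \<noteq> c"
    and t: "t \<longlonglongrightarrow> c"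
    and psi: "\<And>n x. x \<in> K \<Longrightarrow> psi (Suc n) x = (if g x < t (Suc n) then 0 else 1)"
  shows "uniform_limit K psi (\<lambda>x. if g x < c then 0 else 1 :: real) sequentially"
proof (cases "K = {}")
  case True
  then show ?thesis by (simp add: uniform_limit_iff)
next
  case False
  have "continuous_on K (\<lambda>x. \<bar>g x - c\<bar>)"
    using g by (intro continuous_intros)
  then obtain x0 where x0: "x0 \<in> K" "\<And>y. y \<in> K \<Longrightarrow> \<bar>g x0 - c\<bar> \<le> \<bar>g y - c\<bar>"
    using continuous_attains_inf[OF K False] by blast
  have "\<bar>g x0 - c\<bar> > 0" using c x0 by auto
  with t have "\<forall>\<^sub>F n in sequentially. dist (t (Suc n)) c < \<bar>g x0 - c\<bar>"
    by (intro eventually_sequentially_Suc[THEN iffD2] tendstoD)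
  then have "\<forall>\<^sub>F n in sequentially. \<forall>x\<in>K. psi (Suc n) x = (if g x < c then 0 else 1)"
  proof eventually_elim
    case (elim n)
    show ?case
    proof
      fix x assume x: "x \<in> K"
      have "(g x < t (Suc n)) = (g x < c)"
        using elim x0(2)[OF x] unfolding dist_real_def by linarith
      then show "psi (Suc n) x = (if g x < c then 0 else 1)"
        by (simp only: psi[OF x])
    qed
  qed
  then have "\<forall>\<^sub>F n in sequentially. \<forall>x\<in>K. psi n x = (if g x < c then 0 else 1)"
    by (rule eventually_sequentially_Suc[THEN iffD1])
  then show ?thesis
    by (subst uniform_limit_cong[where g = "\<lambda>_ x. if g x < c then 0 else 1"])
       (auto intro: uniform_limit_const)
qed

lemma tau_continuous_on: "p > 0 \<Longrightarrow> continuous_on S (tau p x1 x2)"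
  unfolding tau_def[abs_def]
  by (intro continuous_intros continuous_on_powr') auto

lemma tau_bounded:
  assumes "bounded \<Omega>" and "p \<ge> 0"
  obtains T where "T > 0" "\<And>x. x \<in> \<Omega> \<Longrightarrow> \<bar>tau p x1 x2 x\<bar> < T"
proof -
  obtain B where B: "\<And>x. x \<in> \<Omega> \<Longrightarrow> norm x \<le> B"
    using assms(1) bounded_iff by blast
  have "\<bar>tau p x1 x2 x\<bar> < (B + norm x1) powr p + (B + norm x2) powr p + 1" if "x \<in> \<Omega>" for x
  proof -
    have "norm (x - x1) powr p \<le> (B + norm x1) powr p" "norm (x - x2) powr p \<le> (B + norm x2) powr p"
      using B[OF that] norm_triangle_ineq4[of x x1] norm_triangle_ineq4[of x x2] assms(2)
      by (auto intro!: powr_mono2)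
    moreover have "norm (x - x1) powr p \<ge> 0" "norm (x - x2) powr p \<ge> 0" by auto
    ultimately show ?thesis unfolding tau_def by linarith
  qed
  moreover have "(B + norm x1) powr p + (B + norm x2) powr p + 1 > 0"
    by (simp add: add_nonneg_pos)
  ultimately show ?thesis using that by blast
qed

lemma bounded_range_Gfun:
  assumes "bounded \<Omega>" and "p \<ge> 0" and cont: "continuous_on UNIV (Gfun h1 h2 \<Omega> f p x1 x2)"
  shows "bounded (range (Gfun h1 h2 \<Omega> f p x1 x2))" (is "bounded (range ?G)")
proof -
  obtain T where "T > 0" and T: "\<And>x. x \<in> \<Omega> \<Longrightarrow> \<bar>tau p x1 x2 x\<bar> < T"
    using tau_bounded assms(1,2) by blast
  have "{x\<in>\<Omega>. tau p x1 x2 x < r} = {x\<in>\<Omega>. tau p x1 x2 x < max (-T) (min T r)}" for r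
    using T by (fastforce simp: abs_less_iff)
  then have "?G r = ?G (max (-T) (min T r))" for r
    unfolding Gfun_def mfun_def by simp
  then have "?G r \<in> ?G ` {-T..T}" for r
    using \<open>T > 0\<close> by (intro rev_image_eqI[of "max (-T) (min T r)"]) auto
  then have "range ?G \<subseteq> ?G ` {-T..T}"
    by blast
  moreover have "compact (?G ` {-T..T})"
    by (intro compact_continuous_image continuous_on_subset[OF cont]) auto
  ultimately show ?thesis
    using bounded_subset compact_imp_bounded by blast
qed

lemma set_integral_threshold_eq_mfun:
  assumes "\<And>x. x \<in> \<Omega> \<Longrightarrow> psi x = (if tau p x1 x2 x < s then 0 else 1)"
  shows "(LINT x:\<Omega>|lborel. (1 - psi x) * f x) = mfun \<Omega> f p x1 x2 s"
  unfolding mfun_def set_lebesgue_integral_def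
  by (rule arg_cong[where f = "integral\<^sup>L lborel"], rule ext)
     (auto simp: indicator_def assms)

theorem proposition5p1:
  fixes \<Omega> :: "'a::euclidean_space set" and f :: "'a \<Rightarrow> real" and p :: real
    and x1 x2 :: 'a and h1 h2 :: "real \<Rightarrow> real"
    and psi :: "nat \<Rightarrow> 'a \<Rightarrow> real" and t :: "nat \<Rightarrow> real"
  assumes \<Omega>_borel: "\<Omega> \<in> sets borel" and \<Omega>_bdd: "bounded \<Omega>"
    and f_nonneg: "\<And>x. x \<in> \<Omega> \<Longrightarrow> f x \<ge> 0"
    and f_int: "set_integrable lborel \<Omega> f"
    and f_one: "(LINT x:\<Omega>|lborel. f x) = 1"
    and p: "p \<ge> 1"
    and x1: "x1 \<in> \<Omega>" and x2: "x2 \<in> \<Omega>"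
    and h1_cont: "continuous_on {0..1} h1" and h1_mono: "mono_on {0..1} h1"
    and h1_nonneg: "\<And>s. s \<in> {0..1} \<Longrightarrow> h1 s \<ge> 0"
    and h2_cont: "continuous_on {0..1} h2" and h2_mono: "mono_on {0..1} h2"
    and h2_nonneg: "\<And>s. s \<in> {0..1} \<Longrightarrow> h2 s \<ge> 0"
    and G_contr: "\<And>s r. s \<noteq> r \<Longrightarrow>
        \<bar>Gfun h1 h2 \<Omega> f p x1 x2 s - Gfun h1 h2 \<Omega> f p x1 x2 r\<bar> < \<bar>s - r\<bar>"
    and psi0_meas: "set_borel_measurable borel \<Omega> (psi 0)"
    and psi0_vals: "\<And>x. x \<in> \<Omega> \<Longrightarrow> psi 0 x \<in> {0, 1}"
    and t_rec: "\<And>j. t (Suc j) =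
        h2 (1 - (LINT x:\<Omega>|lborel. (1 - psi j x) * f x))
        - h1 (LINT x:\<Omega>|lborel. (1 - psi j x) * f x)"
    and psi_rec: "\<And>j x. x \<in> \<Omega> \<Longrightarrow>
        psi (Suc j) x = (if tau p x1 x2 x < t (Suc j) then 0 else 1)"
  shows "\<exists>tbar. Gfun h1 h2 \<Omega> f p x1 x2 tbar = tbar \<and> t \<longlonglongrightarrow> tbar \<and>
    (\<forall>K. compact K \<longrightarrow> K \<subseteq> \<Omega> - {x. tau p x1 x2 x = tbar} \<longrightarrow>
       uniform_limit K psi (\<lambda>x. if tau p x1 x2 x < tbar then 0 else 1) sequentially)"
proof -
  define G where "G = Gfun h1 h2 \<Omega> f p x1 x2"
  have contr: "s \<noteq> r \<Longrightarrow> dist (G s) (G r) < dist s r" for s r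
    using G_contr unfolding G_def dist_real_def by blast
  have "continuous_on UNIV G"
    using contr by (rule strict_contraction_continuous)
  moreover from this have "bounded (range G)"
    unfolding G_def using \<Omega>_bdd p by (intro bounded_range_Gfun) auto
  ultimately obtain tbar where fixpoint: "G tbar = tbar"
    by (rule bounded_continuous_real_fixpoint)
  have iter: "t (Suc (Suc j)) = G (t (Suc j))" for j
    using t_rec[of "Suc j"] set_integral_threshold_eq_mfun[OF psi_rec]
    unfolding G_def Gfun_def by simp
  have "(\<lambda>j. t (Suc j)) \<longlonglongrightarrow> tbar"
    using contr fixpoint iter by (rule strict_contraction_iterates_tendsto_fixpoint)
  then have t_lim: "t \<longlonglongrightarrow> tbar"
    by (rule LIMSEQ_imp_Suc)
  have "uniform_limit K psi (\<lambda>x. if tau p x1 x2 x < tbar then 0 else 1) sequentially"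
    if "compact K" "K \<subseteq> \<Omega> - {x. tau p x1 x2 x = tbar}" for K
    using that p t_lim psi_rec
    by (intro uniform_limit_threshold_functions tau_continuous_on) auto
  with fixpoint t_lim show ?thesis
    unfolding G_def by blast
qed

end
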